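(* Let $k\ge1$ and let $\Gamma\subset\mathbb{R}_+^k$ be a nonempty compact set of possible allocations. For every random valuation $X$ with values in $\mathbb{R}_+^k$ and finite expectation ($\mathbb{E}\|X\|<\infty$) there exists an allocation-monotonic (incentive compatible and individually rational) $\Gamma$-mechanism $\mu$ with $R(\mu;X)=\textsc{AMonRev}_\Gamma(X)$.
   Context: A $\Gamma$-mechanism $\mu=(q,s)$ consists of $q:\mathbb{R}_+^k\to\Gamma$ and $s:\mathbb{R}_+^k\to\mathbb{R}$; it is IC if $q(x)\cdot x-s(x)\ge q(y)\cdot x-s(y)$ for all $x,y\in\mathbb{R}_+^k$, and IR if $q(x)\cdot x-s(x)\ge0$ for all $x\in\mathbb{R}_+^k$. It is allocation monotonic if $q(y)\ge q(x)$ (coordinatewise) whenever $y\ge x$ (coordinatewise) in $\mathbb{R}_+^k$. The revenue is $R(\mu;X):=\mathbb{E}[s(X)]$, and $\textsc{AMonRev}_\Gamma(X)$ is the supremum of $R(\mu;X)$ over all allocation-monotonic IC and IR $\Gamma$-mechanisms $\mu$. *)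

theory Defs
  imports "HOL-Probability.Probability"
begin

definition nonneg_orthant :: "(real^'k) set" where
  "nonneg_orthant = {x. \<forall>i. 0 \<le> x $ i}"

text \<open>A Gamma-mechanism (q,s): q maps R_+^k into Gamma (s is any real function on R_+^k).
  Values of q, s outside R_+^k are irrelevant.\<close>
definition is_mechanism :: "(real^'k) set \<Rightarrow> (real^'k \<Rightarrow> real^'k) \<Rightarrow> (real^'k \<Rightarrow> real) \<Rightarrow> bool" where
  "is_mechanism \<Gamma> q s = (\<forall>x\<in>nonneg_orthant. q x \<in> \<Gamma>)"

definition mech_IC :: "(real^'k \<Rightarrow> real^'k) \<Rightarrow> (real^'k \<Rightarrow> real) \<Rightarrow> bool" where
  "mech_IC q s = (\<forall>x\<in>nonneg_orthant. \<forall>y\<in>nonneg_orthant.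
      q x \<bullet> x - s x \<ge> q y \<bullet> x - s y)"

definition mech_IR :: "(real^'k \<Rightarrow> real^'k) \<Rightarrow> (real^'k \<Rightarrow> real) \<Rightarrow> bool" where
  "mech_IR q s = (\<forall>x\<in>nonneg_orthant. q x \<bullet> x - s x \<ge> 0)"

definition alloc_monotonic :: "(real^'k \<Rightarrow> real^'k) \<Rightarrow> bool" where
  "alloc_monotonic q = (\<forall>x\<in>nonneg_orthant. \<forall>y\<in>nonneg_orthant.
      (\<forall>i. x $ i \<le> y $ i) \<longrightarrow> (\<forall>i. q x $ i \<le> q y $ i))"

definition revenue :: "'a measure \<Rightarrow> ('a \<Rightarrow> real^'k) \<Rightarrow> (real^'k \<Rightarrow> real) \<Rightarrow> real" where
  "revenue M X s = (\<integral>\<omega>. s (X \<omega>) \<partial>M)"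

text \<open>Admissible mechanisms for AMonRev: allocation-monotonic, IC, IR Gamma-mechanisms
  whose payment s(X) is a random variable (so that E[s(X)] makes sense).\<close>
definition amon_mechanisms ::
  "(real^'k) set \<Rightarrow> 'a measure \<Rightarrow> ('a \<Rightarrow> real^'k) \<Rightarrow> ((real^'k \<Rightarrow> real^'k) \<times> (real^'k \<Rightarrow> real)) set" where
  "amon_mechanisms \<Gamma> M X = {(q, s). is_mechanism \<Gamma> q s \<and> mech_IC q s \<and> mech_IR q s
      \<and> alloc_monotonic q \<and> (\<lambda>\<omega>. s (X \<omega>)) \<in> borel_measurable M}"

definition AMonRev :: "(real^'k) set \<Rightarrow> 'a measure \<Rightarrow> ('a \<Rightarrow> real^'k) \<Rightarrow> ereal" where
  "AMonRev \<Gamma> M X = (SUP \<mu> \<in> amon_mechanisms \<Gamma> M X. ereal (revenue M X (snd \<mu>)))"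

end

theory Submission
  imports Defs
begin

(* Take mechanisms (q_n, s_n) whose revenues tend to the supremum and let u_n(x) = q_n(x).x - s_n(x) + s_n(0)
   be the buyer's utility, normalised so that u_n(0) = 0. Incentive compatibility says precisely that q_n is a
   subgradient field of u_n, so the u_n are B-Lipschitz with 0 <= u_n(x) <= B|x|, where B bounds Gamma. By
   Tychonoff, (q_n, u_n) has a pointwise cluster point (q, u) along a filter finer than the sequential one, and q
   is again a monotone subgradient field of u with values in Gamma. Payments need not converge along this filter,
   but s_n(x) <= (u_n((1+t)x) - u_n(x))/t - u_n(x) for every t > 0, and the expectations of these bounds do
   converge, because the u_n are equi-Lipschitz and |X| is integrable. As t -> 0+ the bound tends to
   Q(x).x - u(x), where Q(x) = lim q((1+t)x) is the subgradient of u at x that is maximal in the direction x.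
   The mechanism (Q, Q(x).x - u(x)) is admissible and its revenue is at least the supremum. *)

lemma closed_nonneg_orthant: "closed (nonneg_orthant :: (real^'k) set)"
proof -
  have "nonneg_orthant = (\<Inter>i. {x::real^'k. 0 \<le> x $ i})"
    unfolding nonneg_orthant_def by auto
  moreover have "closed {x::real^'k. 0 \<le> x $ i}" for i
    by (intro closed_Collect_le continuous_intros)
  ultimately show ?thesis
    by (metis closed_INT)
qed

lemma zero_in_nonneg_orthant [simp]: "0 \<in> nonneg_orthant"
  by (simp add: nonneg_orthant_def)

lemma scaleR_in_nonneg_orthant:
  "0 \<le> c \<Longrightarrow> x \<in> nonneg_orthant \<Longrightarrow> c *\<^sub>R x \<in> nonneg_orthant"
  by (simp add: nonneg_orthant_def)

lemma inner_nonneg_orthant_nonneg: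
  "x \<in> nonneg_orthant \<Longrightarrow> y \<in> nonneg_orthant \<Longrightarrow> 0 \<le> x \<bullet> y"
  unfolding nonneg_orthant_def inner_vec_def by (auto intro: sum_nonneg)

lemma abs_inner_le_bound: "norm a \<le> B \<Longrightarrow> \<bar>a \<bullet> b\<bar> \<le> B * norm b"
  by (meson Cauchy_Schwarz_ineq2 mult_right_mono norm_ge_zero order_trans)

section \<open>Integrals of equi-Lipschitz functions of a random vector\<close>

lemma borel_measurable_continuous_on_comp:
  assumes "continuous_on S f" "Y \<in> borel_measurable M" "\<And>\<omega>. \<omega> \<in> space M \<Longrightarrow> Y \<omega> \<in> S"
  shows "(\<lambda>\<omega>. f (Y \<omega>)) \<in> borel_measurable M"
proof -
  have "Y \<in> measurable M (restrict_space borel S)"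
    using assms(2,3) by (intro measurable_restrict_space2) auto
  then show ?thesis
    using borel_measurable_continuous_on_restrict[OF assms(1)] by (rule measurable_compose)
qed

lemma integrable_continuous_on_comp_linear_growth:
  fixes f :: "'b::real_normed_vector \<Rightarrow> real"
  assumes "continuous_on S f" "\<And>x. x \<in> S \<Longrightarrow> \<bar>f x\<bar> \<le> B * norm x"
    and "Y \<in> borel_measurable M" "\<And>\<omega>. \<omega> \<in> space M \<Longrightarrow> Y \<omega> \<in> S"
    and "integrable M (\<lambda>\<omega>. norm (Y \<omega>))"
  shows "integrable M (\<lambda>\<omega>. f (Y \<omega>))"
proof (rule Bochner_Integration.integrable_bound)
  show "integrable M (\<lambda>\<omega>. B * norm (Y \<omega>))"
    using assms(5) by simp
  show "(\<lambda>\<omega>. f (Y \<omega>)) \<in> borel_measurable M"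
    using assms(1,3,4) by (rule borel_measurable_continuous_on_comp)
  show "AE \<omega> in M. norm (f (Y \<omega>)) \<le> norm (B * norm (Y \<omega>))"
  proof (rule AE_I2)
    fix \<omega> assume "\<omega> \<in> space M"
    then have "\<bar>f (Y \<omega>)\<bar> \<le> B * norm (Y \<omega>)"
      using assms(2,4) by blast
    then show "norm (f (Y \<omega>)) \<le> norm (B * norm (Y \<omega>))"
      using abs_ge_self[of "B * norm (Y \<omega>)"] by simp
  qed
qed

lemma integral_upper_tail_tendsto_zero:
  fixes f :: "'a \<Rightarrow> real"
  assumes "integrable M f"
  shows "(\<lambda>m::nat. \<integral>\<omega>. (if f \<omega> > real m then f \<omega> else 0) \<partial>M) \<longlonglongrightarrow> 0"
proof -
  have "(\<lambda>m::nat. \<integral>\<omega>. (if f \<omega> > real m then f \<omega> else 0) \<partial>M) \<longlonglongrightarrow> (\<integral>\<omega>. 0 \<partial>M)"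
  proof (rule integral_dominated_convergence[where w="\<lambda>\<omega>. \<bar>f \<omega>\<bar>"])
    show "AE \<omega> in M. (\<lambda>m. if f \<omega> > real m then f \<omega> else 0) \<longlonglongrightarrow> 0"
    proof (rule AE_I2)
      fix \<omega>
      obtain N where "f \<omega> < real N"
        using reals_Archimedean2 by blast
      then have "\<forall>\<^sub>F m in sequentially. (if f \<omega> > real m then f \<omega> else 0) = 0"
        unfolding eventually_sequentially by (intro exI[of _ N]) auto
      then show "(\<lambda>m. if f \<omega> > real m then f \<omega> else 0) \<longlonglongrightarrow> 0"
        by (rule tendsto_eventually)
    qed
    show "integrable M (\<lambda>\<omega>. \<bar>f \<omega>\<bar>)"
      using assms by simp
    show "(\<lambda>\<omega>. if f \<omega> > real m then f \<omega> else 0) \<in> borel_measurable M" for m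
      using borel_measurable_integrable[OF assms] by measurable
    show "AE \<omega> in M. norm (if f \<omega> > real m then f \<omega> else 0) \<le> \<bar>f \<omega>\<bar>" for m
      by (intro AE_I2) auto
  qed simp
  then show ?thesis
    by simp
qed

lemma equi_lipschitz_uniform_limit:
  fixes v :: "'i \<Rightarrow> 'b::metric_space \<Rightarrow> 'c::metric_space"
  assumes "compact K" and "\<And>n. L-lipschitz_on K (v n)" and "L-lipschitz_on K w"
    and "\<And>x. x \<in> K \<Longrightarrow> ((\<lambda>n. v n x) \<longlongrightarrow> w x) F"
  shows "uniform_limit K v w F"
proof (rule uniform_limitI)
  fix e :: real assume "e > 0"
  have "L \<ge> 0"
    using assms(3) by (rule lipschitz_on_nonneg)
  define r where "r = e / (2 * L + 1)"
  have "r > 0"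
    using \<open>e > 0\<close> \<open>L \<ge> 0\<close> by (simp add: r_def)
  obtain C where C: "C \<subseteq> K" "finite C" "K \<subseteq> (\<Union>c\<in>C. ball c r)"
    using compactE_image[OF assms(1), of K "\<lambda>c. ball c r"] \<open>r > 0\<close> by force
  have "\<forall>\<^sub>F n in F. \<forall>c\<in>C. dist (v n c) (w c) < r"
    using C(2)
  proof (rule eventually_ball_finite, intro ballI)
    fix c assume "c \<in> C"
    then show "\<forall>\<^sub>F n in F. dist (v n c) (w c) < r"
      using C(1) assms(4) \<open>r > 0\<close> tendstoD by blast
  qed
  then show "\<forall>\<^sub>F n in F. \<forall>x\<in>K. dist (v n x) (w x) < e"
  proof (rule eventually_mono, intro ballI)
    fix n x assume near: "\<forall>c\<in>C. dist (v n c) (w c) < r" and "x \<in> K"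
    then obtain c where c: "c \<in> C" "dist c x < r"
      using C(3) by auto
    have "dist (v n x) (w x) \<le> dist (v n x) (v n c) + dist (v n c) (w c) + dist (w c) (w x)"
      using dist_triangle[of "v n x" "w x" "v n c"] dist_triangle[of "v n c" "w x" "w c"] by linarith
    also have "\<dots> < L * r + r + L * r"
    proof -
      have "dist (v n x) (v n c) \<le> L * dist x c" "dist (w c) (w x) \<le> L * dist c x"
        using lipschitz_onD[OF assms(2)] lipschitz_onD[OF assms(3)] \<open>x \<in> K\<close> c C(1) by auto
      moreover have "L * dist c x \<le> L * r"
        using c(2) \<open>L \<ge> 0\<close> by (simp add: mult_left_mono)
      moreover have "dist (v n c) (w c) < r"
        using near c(1) by blast
      ultimately show ?thesis
        by (simp add: dist_commute)
    qed
    also have "\<dots> = (2 * L + 1) * r"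
      by (simp add: algebra_simps)
    also have "\<dots> = e"
      using \<open>L \<ge> 0\<close> by (simp add: r_def)
    finally show "dist (v n x) (w x) < e" .
  qed
qed

lemma abs_integral_diff_le_tail:
  fixes f g h :: "'a \<Rightarrow> real"
  assumes "prob_space M" and "integrable M f" "integrable M g" "integrable M h" and "0 \<le> \<epsilon>"
    and "\<And>\<omega>. \<omega> \<in> space M \<Longrightarrow> h \<omega> \<le> R \<Longrightarrow> \<bar>f \<omega> - g \<omega>\<bar> \<le> \<epsilon>"
    and "\<And>\<omega>. \<omega> \<in> space M \<Longrightarrow> \<bar>f \<omega> - g \<omega>\<bar> \<le> C * h \<omega>"
  shows "\<bar>integral\<^sup>L M f - integral\<^sup>L M g\<bar> \<le> \<epsilon> + C * (\<integral>\<omega>. (if h \<omega> > R then h \<omega> else 0) \<partial>M)"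
proof -
  interpret prob_space M by fact
  define tail where "tail = (\<lambda>\<omega>. if h \<omega> > R then h \<omega> else 0)"
  have "integrable M tail"
  proof (rule Bochner_Integration.integrable_bound[OF assms(4)])
    show "tail \<in> borel_measurable M"
      unfolding tail_def using borel_measurable_integrable[OF assms(4)] by measurable
  qed (auto simp: tail_def)
  have "\<bar>integral\<^sup>L M f - integral\<^sup>L M g\<bar> = \<bar>\<integral>\<omega>. f \<omega> - g \<omega> \<partial>M\<bar>"
    using assms(2,3) by simp
  also have "\<dots> \<le> (\<integral>\<omega>. \<bar>f \<omega> - g \<omega>\<bar> \<partial>M)"
    using integral_norm_bound[of M "\<lambda>\<omega>. f \<omega> - g \<omega>"] by simp
  also have "\<dots> \<le> (\<integral>\<omega>. \<epsilon> + C * tail \<omega> \<partial>M)"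
  proof (rule integral_mono)
    show "\<bar>f \<omega> - g \<omega>\<bar> \<le> \<epsilon> + C * tail \<omega>" if "\<omega> \<in> space M" for \<omega>
      using assms(5) assms(6,7)[OF that] by (cases "h \<omega> > R") (auto simp: tail_def)
  qed (use assms(2,3) \<open>integrable M tail\<close> in auto)
  also have "\<dots> = \<epsilon> + C * integral\<^sup>L M tail"
    using \<open>integrable M tail\<close> by (simp add: prob_space)
  finally show ?thesis
    by (simp add: tail_def)
qed

lemma integral_tendsto_equi_lipschitz:
  fixes v :: "'i \<Rightarrow> 'b::euclidean_space \<Rightarrow> real"
  assumes "prob_space M" and "closed S"
    and Y: "Y \<in> borel_measurable M" "\<And>\<omega>. \<omega> \<in> space M \<Longrightarrow> Y \<omega> \<in> S"
      "integrable M (\<lambda>\<omega>. norm (Y \<omega>))"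
    and lip: "\<And>n. L-lipschitz_on S (v n)" "L-lipschitz_on S w"
    and growth: "\<And>n x. x \<in> S \<Longrightarrow> \<bar>v n x\<bar> \<le> B * norm x" "\<And>x. x \<in> S \<Longrightarrow> \<bar>w x\<bar> \<le> B * norm x"
    and lim: "\<And>x. x \<in> S \<Longrightarrow> ((\<lambda>n. v n x) \<longlongrightarrow> w x) F"
  shows "((\<lambda>n. \<integral>\<omega>. v n (Y \<omega>) \<partial>M) \<longlongrightarrow> (\<integral>\<omega>. w (Y \<omega>) \<partial>M)) F"
proof (rule tendstoI)
  fix e :: real assume "e > 0"
  define tail where "tail R = (\<integral>\<omega>. (if norm (Y \<omega>) > real R then norm (Y \<omega>) else 0) \<partial>M)" for R
  have "(\<lambda>R. 2 * \<bar>B\<bar> * tail R) \<longlonglongrightarrow> 2 * \<bar>B\<bar> * 0"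
    unfolding tail_def using Y(3) by (intro tendsto_mult_left integral_upper_tail_tendsto_zero)
  then have "\<forall>\<^sub>F R in sequentially. 2 * \<bar>B\<bar> * tail R < e / 2"
    using \<open>e > 0\<close> by (intro order_tendstoD(2)) auto
  then obtain R where R: "2 * \<bar>B\<bar> * tail R < e / 2"
    unfolding eventually_sequentially by blast
  define K where "K = cball 0 (real R) \<inter> S"
  have "compact K" "K \<subseteq> S"
    using \<open>closed S\<close> by (auto simp: K_def)
  then have "uniform_limit K v w F"
    using lip lim by (intro equi_lipschitz_uniform_limit) (auto intro: lipschitz_on_subset)
  then have "\<forall>\<^sub>F n in F. \<forall>x\<in>K. dist (v n x) (w x) < e / 4"
    using \<open>e > 0\<close> by (intro uniform_limitD) simp_all
  then show "\<forall>\<^sub>F n in F. dist (\<integral>\<omega>. v n (Y \<omega>) \<partial>M) (\<integral>\<omega>. w (Y \<omega>) \<partial>M) < e"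
  proof (rule eventually_mono)
    fix n assume near: "\<forall>x\<in>K. dist (v n x) (w x) < e / 4"
    have integrable: "integrable M (\<lambda>\<omega>. u (Y \<omega>))"
      if "L-lipschitz_on S u" "\<And>x. x \<in> S \<Longrightarrow> \<bar>u x\<bar> \<le> B * norm x" for u
      using lipschitz_on_continuous_on[OF that(1)] that(2) Y
      by (rule integrable_continuous_on_comp_linear_growth)
    have "\<bar>v n (Y \<omega>) - w (Y \<omega>)\<bar> \<le> 2 * \<bar>B\<bar> * norm (Y \<omega>)" if "\<omega> \<in> space M" for \<omega>
    proof -
      have "B * norm (Y \<omega>) \<le> \<bar>B\<bar> * norm (Y \<omega>)"
        by (rule mult_right_mono) auto
      then show ?thesis
        using abs_triangle_ineq4[of "v n (Y \<omega>)" "w (Y \<omega>)"] growth(1)[OF Y(2)[OF that], of n]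
          growth(2)[OF Y(2)[OF that]] by linarith
    qed
    moreover have "\<bar>v n (Y \<omega>) - w (Y \<omega>)\<bar> \<le> e / 4" if "\<omega> \<in> space M" "norm (Y \<omega>) \<le> real R" for \<omega>
      using near Y(2)[OF that(1)] that(2) by (force simp: K_def dist_real_def)
    ultimately have "\<bar>(\<integral>\<omega>. v n (Y \<omega>) \<partial>M) - (\<integral>\<omega>. w (Y \<omega>) \<partial>M)\<bar> \<le> e / 4 + 2 * \<bar>B\<bar> * tail R"
      unfolding tail_def using \<open>e > 0\<close>
      by (intro abs_integral_diff_le_tail[OF assms(1) integrable[OF lip(1) growth(1)]
            integrable[OF lip(2) growth(2)] Y(3)]) auto
    then show "dist (\<integral>\<omega>. v n (Y \<omega>) \<partial>M) (\<integral>\<omega>. w (Y \<omega>) \<partial>M) < e"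
      using R by (simp add: dist_real_def)
  qed
qed

section \<open>Cluster points in products of compact sets\<close>

(* The product of uncountably many compact factors is compact but not sequentially compact,
   so instead of a convergent subsequence we get a convergent filter finer than sequentially. *)
lemma compact_sequence_cluster_filter:
  fixes f :: "nat \<Rightarrow> 'b::topological_space"
  assumes "compact K" and "\<And>n. f n \<in> K"
  obtains F g where "F \<noteq> bot" "F \<le> sequentially" "(f \<longlongrightarrow> g) F"
proof -
  have "filtermap f sequentially \<noteq> bot" "\<forall>\<^sub>F x in filtermap f sequentially. x \<in> K"
    using assms(2) by (simp_all add: filtermap_bot_iff eventually_filtermap)
  then obtain g where g: "inf (nhds g) (filtermap f sequentially) \<noteq> bot"
    using assms(1) unfolding compact_filter by blast
  define F where "F = inf (filtercomap f (nhds g)) sequentially"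
  have "F \<noteq> bot"
  proof
    assume "F = bot"
    then have "\<forall>\<^sub>F n in F. False"
      by simp
    then obtain P Q where PQ: "eventually P (filtercomap f (nhds g))" "eventually Q sequentially"
      "\<And>n. P n \<Longrightarrow> Q n \<Longrightarrow> False"
      unfolding F_def eventually_inf by blast
    from PQ(1) obtain P' where P': "eventually P' (nhds g)" "\<And>n. P' (f n) \<Longrightarrow> P n"
      unfolding eventually_filtercomap by blast
    have "\<forall>\<^sub>F y in filtermap f sequentially. \<not> P' y"
      unfolding eventually_filtermap using PQ(2) by (rule eventually_mono) (use PQ(3) P'(2) in blast)
    then have "\<forall>\<^sub>F y in inf (nhds g) (filtermap f sequentially). False"
      using P'(1) unfolding eventually_inf by blast
    then show False
      using g by (simp add: eventually_False)
  qed
  moreover have "F \<le> sequentially" "(f \<longlongrightarrow> g) F"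
    unfolding F_def filterlim_iff_le_filtercomap by simp_all
  ultimately show ?thesis
    using that by blast
qed

lemma pointwise_cluster_filter:
  fixes f :: "nat \<Rightarrow> 'a \<Rightarrow> 'b::topological_space"
  assumes "\<And>x. x \<in> A \<Longrightarrow> compact (K x)" and "\<And>n x. x \<in> A \<Longrightarrow> f n x \<in> K x"
  obtains F g where "F \<noteq> bot" "F \<le> sequentially" "\<And>x. x \<in> A \<Longrightarrow> ((\<lambda>n. f n x) \<longlongrightarrow> g x) F"
proof -
  define K' where "K' x = (if x \<in> A then K x else {undefined})" for x
  define f' where "f' n x = (if x \<in> A then f n x else undefined)" for n x
  have "compactin (product_topology (\<lambda>_. euclidean) UNIV) (Pi\<^sub>E UNIV K')"
    using assms(1) by (subst compactin_PiE) (auto simp: K'_def)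
  then have "compact (Pi\<^sub>E UNIV K')"
    by (simp add: euclidean_product_topology)
  moreover have "f' n \<in> Pi\<^sub>E UNIV K'" for n
    using assms(2) by (auto simp: f'_def K'_def)
  ultimately obtain F g where F: "F \<noteq> bot" "F \<le> sequentially" and "(f' \<longlongrightarrow> g) F"
    by (rule compact_sequence_cluster_filter)
  then have f'_lim: "((\<lambda>n. f' n x) \<longlongrightarrow> g x) F" for x
    using continuous_on_tendsto_compose[of UNIV "\<lambda>h. h x"] by (simp add: o_def)
  have "((\<lambda>n. f n x) \<longlongrightarrow> g x) F" if "x \<in> A" for x
    using f'_lim[of x] that by (simp add: f'_def)
  with F that show ?thesis
    by blast
qed

section \<open>Subgradient fields and utilities\<close>

definition subgradient_field :: "'b::real_inner set \<Rightarrow> ('b \<Rightarrow> real) \<Rightarrow> ('b \<Rightarrow> 'b) \<Rightarrow> bool" where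
  "subgradient_field S u q \<longleftrightarrow> (\<forall>x\<in>S. \<forall>y\<in>S. u y + q y \<bullet> (x - y) \<le> u x)"

lemma subgradient_fieldD:
  "subgradient_field S u q \<Longrightarrow> x \<in> S \<Longrightarrow> y \<in> S \<Longrightarrow> u y + q y \<bullet> (x - y) \<le> u x"
  by (simp add: subgradient_field_def)

lemma subgradient_field_lipschitz:
  assumes "subgradient_field S u q" and "\<And>x. x \<in> S \<Longrightarrow> norm (q x) \<le> B" and "0 \<le> B"
  shows "B-lipschitz_on S u"
proof (rule lipschitz_onI)
  fix x y assume "x \<in> S" "y \<in> S"
  have "u y + q y \<bullet> (x - y) \<le> u x" "u x + q x \<bullet> (y - x) \<le> u y"
    using subgradient_fieldD[OF assms(1)] \<open>x \<in> S\<close> \<open>y \<in> S\<close> by auto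
  moreover have "\<bar>q y \<bullet> (x - y)\<bar> \<le> B * norm (x - y)" "\<bar>q x \<bullet> (y - x)\<bar> \<le> B * norm (x - y)"
    using abs_inner_le_bound assms(2) \<open>x \<in> S\<close> \<open>y \<in> S\<close> by (metis norm_minus_commute)+
  ultimately show "dist (u x) (u y) \<le> B * dist x y"
    by (simp add: dist_real_def dist_norm)
qed fact

lemma lipschitz_on_abs_le:
  assumes "B-lipschitz_on S u" and "0 \<in> S" "u 0 = 0" "x \<in> S"
  shows "\<bar>u x\<bar> \<le> B * norm x"
  using lipschitz_onD[OF assms(1) assms(4,2)] assms(3) by (simp add: dist_real_def)

lemma subgradient_field_difference_quotient_bounds:
  assumes "subgradient_field S u q" and "x \<in> S" "(1 + t) *\<^sub>R x \<in> S" "0 < t"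
  shows "q x \<bullet> x \<le> (u ((1 + t) *\<^sub>R x) - u x) / t"
    and "(u ((1 + t) *\<^sub>R x) - u x) / t \<le> q ((1 + t) *\<^sub>R x) \<bullet> x"
proof -
  have "(1 + t) *\<^sub>R x - x = t *\<^sub>R x"
    by (simp add: algebra_simps)
  then have "u x + t * (q x \<bullet> x) \<le> u ((1 + t) *\<^sub>R x)"
            "u ((1 + t) *\<^sub>R x) - t * (q ((1 + t) *\<^sub>R x) \<bullet> x) \<le> u x"
    using subgradient_fieldD[OF assms(1)] assms(2,3)
    by (metis inner_scaleR_right, metis inner_minus_right minus_diff_eq inner_scaleR_right diff_conv_add_uminus)
  then show "q x \<bullet> x \<le> (u ((1 + t) *\<^sub>R x) - u x) / t"
    and "(u ((1 + t) *\<^sub>R x) - u x) / t \<le> q ((1 + t) *\<^sub>R x) \<bullet> x"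
    using \<open>0 < t\<close> by (simp_all add: field_simps)
qed

lemma subgradient_field_tendsto:
  assumes "F \<noteq> bot" and "\<And>n. subgradient_field S (u n) (q n)"
    and "\<And>x. x \<in> S \<Longrightarrow> ((\<lambda>n. u n x) \<longlongrightarrow> u' x) F" "\<And>x. x \<in> S \<Longrightarrow> ((\<lambda>n. q n x) \<longlongrightarrow> q' x) F"
  shows "subgradient_field S u' q'"
  unfolding subgradient_field_def
proof (intro ballI)
  fix x y assume "x \<in> S" "y \<in> S"
  then have "((\<lambda>n. u n y + q n y \<bullet> (x - y)) \<longlongrightarrow> u' y + q' y \<bullet> (x - y)) F"
    using assms(3,4) by (intro tendsto_add tendsto_inner tendsto_const)
  moreover have "\<forall>\<^sub>F n in F. u n y + q n y \<bullet> (x - y) \<le> u n x"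
    using subgradient_fieldD[OF assms(2) \<open>x \<in> S\<close> \<open>y \<in> S\<close>] by simp
  ultimately show "u' y + q' y \<bullet> (x - y) \<le> u' x"
    using tendsto_le[OF assms(1) assms(3)[OF \<open>x \<in> S\<close>]] by blast
qed

(* For t > 0 this bounds q x . x - u x from above for every subgradient field q of u
   (see subgradient_field_difference_quotient_bounds), and unlike q it is determined by u alone. *)
definition quotient_payment :: "real \<Rightarrow> ('b::real_vector \<Rightarrow> real) \<Rightarrow> 'b \<Rightarrow> real" where
  "quotient_payment t u x = (u ((1 + t) *\<^sub>R x) - u x) / t - u x"

lemma lipschitz_on_quotient_payment:
  fixes u :: "'b::real_normed_vector \<Rightarrow> real"
  assumes "B-lipschitz_on S u" and "0 < t" and "\<And>x. x \<in> S \<Longrightarrow> (1 + t) *\<^sub>R x \<in> S"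
  shows "(B * (2 + t) / t + B)-lipschitz_on S (quotient_payment t u)"
proof -
  have "(1 + t)-lipschitz_on S (\<lambda>x. (1 + t) *\<^sub>R x)"
    using lipschitz_on_cmult_nonneg[OF lipschitz_on_id, of "1 + t"] \<open>0 < t\<close> by force
  moreover have "B-lipschitz_on ((\<lambda>x. (1 + t) *\<^sub>R x) ` S) u"
    using assms(3) by (intro lipschitz_on_subset[OF assms(1)]) auto
  ultimately have "(B * (1 + t))-lipschitz_on S (\<lambda>x. u ((1 + t) *\<^sub>R x))"
    by (rule lipschitz_on_compose2)
  then have "(\<bar>1 / t\<bar> * (B * (1 + t) + B) + B)-lipschitz_on S
      (\<lambda>x. 1 / t * (u ((1 + t) *\<^sub>R x) - u x) - u x)"
    using assms(1) by (intro lipschitz_intros)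
  moreover have "\<bar>1 / t\<bar> * (B * (1 + t) + B) = B * (2 + t) / t"
    using \<open>0 < t\<close> by (simp add: field_simps)
  ultimately show ?thesis
    by (simp add: quotient_payment_def)
qed

lemma abs_quotient_payment_le:
  fixes u :: "'b::real_normed_vector \<Rightarrow> real"
  assumes "B-lipschitz_on S u" and "0 < t" and "x \<in> S" "(1 + t) *\<^sub>R x \<in> S" "0 \<in> S" "u 0 = 0"
  shows "\<bar>quotient_payment t u x\<bar> \<le> 2 * B * norm x"
proof -
  have "\<bar>u ((1 + t) *\<^sub>R x) - u x\<bar> \<le> B * (t * norm x)"
    using lipschitz_onD[OF assms(1,4,3)] \<open>0 < t\<close> by (simp add: dist_real_def dist_norm algebra_simps)
  then have "\<bar>(u ((1 + t) *\<^sub>R x) - u x) / t\<bar> \<le> B * norm x"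
    using \<open>0 < t\<close> by (simp add: field_simps)
  moreover have "\<bar>u x\<bar> \<le> B * norm x"
    using lipschitz_on_abs_le assms by blast
  ultimately show ?thesis
    unfolding quotient_payment_def by linarith
qed

definition normalized_utility :: "(real^'k \<Rightarrow> real^'k) \<Rightarrow> (real^'k \<Rightarrow> real) \<Rightarrow> real^'k \<Rightarrow> real" where
  "normalized_utility q s x = q x \<bullet> x - s x + s 0"

lemma normalized_utility_zero [simp]: "normalized_utility q s 0 = 0"
  by (simp add: normalized_utility_def)

lemma mech_IC_imp_subgradient_field:
  "mech_IC q s \<Longrightarrow> subgradient_field nonneg_orthant (normalized_utility q s) q"
  by (auto simp: mech_IC_def subgradient_field_def normalized_utility_def inner_diff_right)

lemma subgradient_field_imp_mech_IC:
  fixes u :: "real^'k \<Rightarrow> real"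
  assumes "subgradient_field nonneg_orthant u q"
  shows "mech_IC q (\<lambda>x. q x \<bullet> x - u x)"
  unfolding mech_IC_def
proof (intro ballI)
  fix x y :: "real^'k" assume "x \<in> nonneg_orthant" "y \<in> nonneg_orthant"
  then have "u y + q y \<bullet> (x - y) \<le> u x"
    by (rule subgradient_fieldD[OF assms])
  then show "q y \<bullet> x - (q y \<bullet> y - u y) \<le> q x \<bullet> x - (q x \<bullet> x - u x)"
    by (simp add: inner_diff_right)
qed

lemma subgradient_field_nonneg:
  assumes "subgradient_field nonneg_orthant u q" "q 0 \<in> nonneg_orthant" "u 0 = 0" "x \<in> nonneg_orthant"
  shows "0 \<le> u x"
  using subgradient_fieldD[OF assms(1) assms(4) zero_in_nonneg_orthant]
    inner_nonneg_orthant_nonneg[OF assms(2,4)] assms(3) by simp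

lemma alloc_monotonic_tendsto:
  fixes q :: "'i \<Rightarrow> real^'k \<Rightarrow> real^'k"
  assumes "F \<noteq> bot" and "\<And>n. alloc_monotonic (q n)"
    and "\<And>x. x \<in> nonneg_orthant \<Longrightarrow> ((\<lambda>n. q n x) \<longlongrightarrow> q' x) F"
  shows "alloc_monotonic q'"
  unfolding alloc_monotonic_def
proof (intro ballI impI allI)
  fix x y :: "real^'k" and i
  assume x: "x \<in> nonneg_orthant" and y: "y \<in> nonneg_orthant" and le: "\<forall>i. x $ i \<le> y $ i"
  have "\<forall>\<^sub>F n in F. q n x $ i \<le> q n y $ i"
    using assms(2) x y le by (simp add: alloc_monotonic_def)
  then show "q' x $ i \<le> q' y $ i"
    using tendsto_le[OF assms(1) tendsto_vec_nth[OF assms(3)[OF y]] tendsto_vec_nth[OF assms(3)[OF x]]]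
    by blast
qed

(* Along each ray the allocations q((1 + t) x) decrease as t decreases (q is monotone), so the limit exists. *)
definition radial_right_limit :: "(real^'k \<Rightarrow> real^'k) \<Rightarrow> real^'k \<Rightarrow> real^'k" where
  "radial_right_limit q x = lim (\<lambda>m. q ((1 + 1 / real (Suc m)) *\<^sub>R x))"

section \<open>Limits of near-optimal mechanisms\<close>

locale auction = prob_space M
  for M :: "'a measure" +
  fixes \<Gamma> :: "(real^'k) set" and B :: real and X :: "'a \<Rightarrow> real^'k"
  assumes allocations_nonempty: "\<Gamma> \<noteq> {}"
    and allocations_compact: "compact \<Gamma>"
    and allocations_nonneg: "\<Gamma> \<subseteq> nonneg_orthant"
    and norm_allocation_le: "\<gamma> \<in> \<Gamma> \<Longrightarrow> norm \<gamma> \<le> B"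
    and valuation_measurable: "X \<in> borel_measurable M"
    and valuation_nonneg: "\<omega> \<in> space M \<Longrightarrow> X \<omega> \<in> nonneg_orthant"
    and valuation_integrable: "integrable M (\<lambda>\<omega>. norm (X \<omega>))"
begin

lemma B_nonneg: "0 \<le> B"
  using allocations_nonempty norm_allocation_le norm_ge_zero order_trans by blast

lemma allocation_nonneg: "q ` nonneg_orthant \<subseteq> \<Gamma> \<Longrightarrow> x \<in> nonneg_orthant \<Longrightarrow> q x \<in> nonneg_orthant"
  using allocations_nonneg by blast

lemma utility_lipschitz:
  assumes "q ` nonneg_orthant \<subseteq> \<Gamma>" and "subgradient_field nonneg_orthant u q"
  shows "B-lipschitz_on nonneg_orthant u"
  using assms norm_allocation_le B_nonneg by (intro subgradient_field_lipschitz) auto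

lemma amon_mechanismsD:
  assumes "(q, s) \<in> amon_mechanisms \<Gamma> M X"
  shows "q ` nonneg_orthant \<subseteq> \<Gamma>" and "alloc_monotonic q"
    and "subgradient_field nonneg_orthant (normalized_utility q s) q"
  using assms mech_IC_imp_subgradient_field by (auto simp: amon_mechanisms_def is_mechanism_def)

lemma normalized_utility_bounds:
  assumes "(q, s) \<in> amon_mechanisms \<Gamma> M X" and "x \<in> nonneg_orthant"
  shows "0 \<le> normalized_utility q s x" and "normalized_utility q s x \<le> B * norm x"
proof -
  note q = amon_mechanismsD(1)[OF assms(1)] and u = amon_mechanismsD(3)[OF assms(1)]
  show "0 \<le> normalized_utility q s x"
    using subgradient_field_nonneg[OF u allocation_nonneg[OF q]] assms(2) by simp
  show "normalized_utility q s x \<le> B * norm x"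
    using lipschitz_on_abs_le[OF utility_lipschitz[OF q u] zero_in_nonneg_orthant _ assms(2)] by simp
qed

lemma payment_bounds:
  assumes "(q, s) \<in> amon_mechanisms \<Gamma> M X" and "x \<in> nonneg_orthant"
  shows "s 0 \<le> s x" and "s x \<le> B * norm x" and "s 0 \<le> 0"
proof -
  have q: "q x \<in> \<Gamma>" and IC: "mech_IC q s" and IR: "mech_IR q s"
    using assms by (auto simp: amon_mechanisms_def is_mechanism_def)
  have "q x \<bullet> 0 - s x \<le> q 0 \<bullet> 0 - s 0"
    using IC assms(2) zero_in_nonneg_orthant unfolding mech_IC_def by blast
  then show "s 0 \<le> s x"
    by simp
  have "\<bar>q x \<bullet> x\<bar> \<le> B * norm x"
    using abs_inner_le_bound norm_allocation_le[OF q] by blast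
  moreover have "s x \<le> q x \<bullet> x"
    using IR assms(2) unfolding mech_IR_def by auto
  ultimately show "s x \<le> B * norm x"
    by linarith
  have "q 0 \<bullet> 0 - s 0 \<ge> 0"
    using IR zero_in_nonneg_orthant unfolding mech_IR_def by blast
  then show "s 0 \<le> 0"
    by simp
qed

lemma integrable_payment:
  assumes "(q, s) \<in> amon_mechanisms \<Gamma> M X"
  shows "integrable M (\<lambda>\<omega>. s (X \<omega>))"
proof (rule Bochner_Integration.integrable_bound)
  show "integrable M (\<lambda>\<omega>. \<bar>s 0\<bar> + B * norm (X \<omega>))"
    using valuation_integrable by simp
  show "(\<lambda>\<omega>. s (X \<omega>)) \<in> borel_measurable M"
    using assms by (simp add: amon_mechanisms_def)
  show "AE \<omega> in M. norm (s (X \<omega>)) \<le> norm (\<bar>s 0\<bar> + B * norm (X \<omega>))"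
  proof (rule AE_I2)
    fix \<omega> assume "\<omega> \<in> space M"
    then have "s 0 \<le> s (X \<omega>)" "s (X \<omega>) \<le> B * norm (X \<omega>)"
      using payment_bounds[OF assms valuation_nonneg] by auto
    moreover have "0 \<le> B * norm (X \<omega>)"
      using B_nonneg by simp
    ultimately show "norm (s (X \<omega>)) \<le> norm (\<bar>s 0\<bar> + B * norm (X \<omega>))"
      by (auto simp: abs_le_iff abs_if)
  qed
qed

lemma revenue_le_bound:
  assumes "(q, s) \<in> amon_mechanisms \<Gamma> M X"
  shows "revenue M X s \<le> B * (\<integral>\<omega>. norm (X \<omega>) \<partial>M)"
proof -
  have "revenue M X s \<le> (\<integral>\<omega>. B * norm (X \<omega>) \<partial>M)"
    unfolding revenue_def using integrable_payment[OF assms] valuation_integrable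
      payment_bounds(2)[OF assms valuation_nonneg] by (intro integral_mono) auto
  then show ?thesis
    by simp
qed

lemma AMonRev_bounds: "0 \<le> AMonRev \<Gamma> M X" "AMonRev \<Gamma> M X \<le> B * (\<integral>\<omega>. norm (X \<omega>) \<partial>M)"
proof -
  obtain \<gamma> where "\<gamma> \<in> \<Gamma>"
    using allocations_nonempty by blast
  then have "((\<lambda>_. \<gamma>), (\<lambda>_. 0)) \<in> amon_mechanisms \<Gamma> M X"
    using allocations_nonneg inner_nonneg_orthant_nonneg
    by (auto simp: amon_mechanisms_def is_mechanism_def mech_IC_def mech_IR_def alloc_monotonic_def)
  then show "0 \<le> AMonRev \<Gamma> M X"
    unfolding AMonRev_def by (rule SUP_upper2) (simp add: revenue_def)
  show "AMonRev \<Gamma> M X \<le> B * (\<integral>\<omega>. norm (X \<omega>) \<partial>M)"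
    unfolding AMonRev_def using revenue_le_bound by (auto intro!: SUP_least)
qed

lemma revenue_le_AMonRev:
  assumes "(q, s) \<in> amon_mechanisms \<Gamma> M X"
  shows "ereal (revenue M X s) \<le> AMonRev \<Gamma> M X"
  unfolding AMonRev_def by (rule SUP_upper2[OF assms]) simp

lemma approximating_mechanisms:
  obtains A q s where "AMonRev \<Gamma> M X = ereal A" and "\<And>n. (q n, s n) \<in> amon_mechanisms \<Gamma> M X"
    and "(\<lambda>n. revenue M X (s n)) \<longlonglongrightarrow> A"
proof -
  define A where "A = real_of_ereal (AMonRev \<Gamma> M X)"
  have A: "AMonRev \<Gamma> M X = ereal A"
    unfolding A_def using AMonRev_bounds by (cases "AMonRev \<Gamma> M X") auto
  have "\<exists>\<mu>\<in>amon_mechanisms \<Gamma> M X. A - 1 / real (Suc n) < revenue M X (snd \<mu>)" for n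
  proof -
    have "ereal (A - 1 / real (Suc n)) < AMonRev \<Gamma> M X"
      using A by simp
    then show ?thesis
      unfolding AMonRev_def less_SUP_iff by simp
  qed
  then obtain \<mu> where \<mu>: "\<And>n. \<mu> n \<in> amon_mechanisms \<Gamma> M X"
    "\<And>n. A - 1 / real (Suc n) < revenue M X (snd (\<mu> n))"
    by metis
  have upper: "\<forall>n. revenue M X (snd (\<mu> n)) \<le> A"
    using \<mu>(1) A unfolding AMonRev_def by (metis SUP_upper ereal_less_eq(3))
  have lower: "\<forall>n. A - 1 / real (Suc n) \<le> revenue M X (snd (\<mu> n))"
    using \<mu>(2) less_imp_le by blast
  have "(\<lambda>n. A - 1 / real (Suc n)) \<longlonglongrightarrow> A - 0"
    by (intro tendsto_diff tendsto_const LIMSEQ_inverse_real_of_nat[unfolded inverse_eq_divide])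
  then have "(\<lambda>n. revenue M X (snd (\<mu> n))) \<longlonglongrightarrow> A"
    using tendsto_sandwich[OF always_eventually[OF lower] always_eventually[OF upper] _ tendsto_const]
    by simp
  then show ?thesis
    using that[OF A, of "\<lambda>n. fst (\<mu> n)" "\<lambda>n. snd (\<mu> n)"] \<mu>(1) by simp
qed

lemma quotient_payment_bounds:
  assumes "B-lipschitz_on nonneg_orthant u" "u 0 = 0" "0 < t"
  shows "(B * (2 + t) / t + B)-lipschitz_on nonneg_orthant (quotient_payment t u)"
    and "\<And>x. x \<in> nonneg_orthant \<Longrightarrow> \<bar>quotient_payment t u x\<bar> \<le> 2 * B * norm x"
  using assms \<open>0 < t\<close>
  by (auto intro!: lipschitz_on_quotient_payment abs_quotient_payment_le scaleR_in_nonneg_orthant)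

lemma integrable_quotient_payment:
  assumes "B-lipschitz_on nonneg_orthant u" "u 0 = 0" "0 < t"
  shows "integrable M (\<lambda>\<omega>. quotient_payment t u (X \<omega>))"
  using lipschitz_on_continuous_on[OF quotient_payment_bounds(1)[OF assms]]
    quotient_payment_bounds(2)[OF assms] valuation_measurable valuation_nonneg valuation_integrable
  by (rule integrable_continuous_on_comp_linear_growth)

lemma revenue_le_integral_quotient_payment:
  assumes "(q, s) \<in> amon_mechanisms \<Gamma> M X" and "0 < t"
  shows "revenue M X s \<le> (\<integral>\<omega>. quotient_payment t (normalized_utility q s) (X \<omega>) \<partial>M)"
  unfolding revenue_def
proof (rule integral_mono)
  note q = amon_mechanismsD(1)[OF assms(1)] and u = amon_mechanismsD(3)[OF assms(1)]
  show "integrable M (\<lambda>\<omega>. s (X \<omega>))"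
    using assms(1) by (rule integrable_payment)
  show "integrable M (\<lambda>\<omega>. quotient_payment t (normalized_utility q s) (X \<omega>))"
    using utility_lipschitz[OF q u] assms(2) by (intro integrable_quotient_payment) simp_all
  fix \<omega> assume "\<omega> \<in> space M"
  then have x: "X \<omega> \<in> nonneg_orthant" and "(1 + t) *\<^sub>R X \<omega> \<in> nonneg_orthant"
    using valuation_nonneg assms(2) by (auto intro: scaleR_in_nonneg_orthant)
  then have "q (X \<omega>) \<bullet> X \<omega> \<le> (normalized_utility q s ((1 + t) *\<^sub>R X \<omega>) - normalized_utility q s (X \<omega>)) / t"
    by (rule subgradient_field_difference_quotient_bounds(1)[OF u _ _ assms(2)])
  moreover have "s 0 \<le> 0"
    using payment_bounds(3)[OF assms(1) x] .
  ultimately show "s (X \<omega>) \<le> quotient_payment t (normalized_utility q s) (X \<omega>)"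
    by (simp add: quotient_payment_def normalized_utility_def)
qed

lemma integral_quotient_payment_tendsto:
  assumes "\<And>n. B-lipschitz_on nonneg_orthant (u n)" "\<And>n. u n 0 = 0"
    and "B-lipschitz_on nonneg_orthant u'" "u' 0 = 0"
    and "\<And>x. x \<in> nonneg_orthant \<Longrightarrow> ((\<lambda>n. u n x) \<longlongrightarrow> u' x) F" and "0 < t"
  shows "((\<lambda>n. \<integral>\<omega>. quotient_payment t (u n) (X \<omega>) \<partial>M) \<longlongrightarrow> (\<integral>\<omega>. quotient_payment t u' (X \<omega>) \<partial>M)) F"
proof (rule integral_tendsto_equi_lipschitz[OF prob_space_axioms closed_nonneg_orthant
      valuation_measurable valuation_nonneg valuation_integrable])
  show "(B * (2 + t) / t + B)-lipschitz_on nonneg_orthant (quotient_payment t (u n))" for n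
    using assms(1,2,6) by (rule quotient_payment_bounds)
  show "(B * (2 + t) / t + B)-lipschitz_on nonneg_orthant (quotient_payment t u')"
    using assms(3,4,6) by (rule quotient_payment_bounds)
  show "\<bar>quotient_payment t (u n) x\<bar> \<le> 2 * B * norm x" if "x \<in> nonneg_orthant" for n x
    using assms(1,2,6) that by (rule quotient_payment_bounds)
  show "\<bar>quotient_payment t u' x\<bar> \<le> 2 * B * norm x" if "x \<in> nonneg_orthant" for x
    using assms(3,4,6) that by (rule quotient_payment_bounds)
  show "((\<lambda>n. quotient_payment t (u n) x) \<longlongrightarrow> quotient_payment t u' x) F" if "x \<in> nonneg_orthant" for x
  proof -
    have "(1 + t) *\<^sub>R x \<in> nonneg_orthant"
      using that \<open>0 < t\<close> by (intro scaleR_in_nonneg_orthant) auto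
    then show ?thesis
      unfolding quotient_payment_def using assms(5,6) that by (intro tendsto_intros) auto
  qed
qed

lemma cluster_limit_of_mechanisms:
  assumes "\<And>n. (q n, s n) \<in> amon_mechanisms \<Gamma> M X"
  obtains F q' u where "F \<noteq> bot" "F \<le> sequentially"
    and "q' ` nonneg_orthant \<subseteq> \<Gamma>" "alloc_monotonic q'" "subgradient_field nonneg_orthant u q'" "u 0 = 0"
    and "\<And>x. x \<in> nonneg_orthant \<Longrightarrow> ((\<lambda>n. normalized_utility (q n) (s n) x) \<longlongrightarrow> u x) F"
proof -
  define u where "u n = normalized_utility (q n) (s n)" for n
  note q = amon_mechanismsD(1,2)[OF assms] and u = amon_mechanismsD(3)[OF assms, folded u_def]
  have range: "(q n x, u n x) \<in> \<Gamma> \<times> {0..B * norm x}" if "x \<in> nonneg_orthant" for n x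
    using q(1) normalized_utility_bounds[OF assms that] that by (auto simp: u_def)
  have "compact (\<Gamma> \<times> {0..B * norm x})" for x :: "real^'k"
    by (intro compact_Times allocations_compact compact_Icc)
  then obtain F g where F: "F \<noteq> bot" "F \<le> sequentially"
    and lim: "\<And>x. x \<in> nonneg_orthant \<Longrightarrow> ((\<lambda>n. (q n x, u n x)) \<longlongrightarrow> g x) F"
    using pointwise_cluster_filter[of nonneg_orthant "\<lambda>x. \<Gamma> \<times> {0..B * norm x}" "\<lambda>n x. (q n x, u n x)"]
      range by blast
  define q' where "q' x = fst (g x)" for x
  define u' where "u' x = snd (g x)" for x
  have q_lim: "((\<lambda>n. q n x) \<longlongrightarrow> q' x) F" and u_lim: "((\<lambda>n. u n x) \<longlongrightarrow> u' x) F"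
    if "x \<in> nonneg_orthant" for x
    using tendsto_fst[OF lim[OF that]] tendsto_snd[OF lim[OF that]] by (simp_all add: q'_def u'_def)
  have "q' ` nonneg_orthant \<subseteq> \<Gamma>"
  proof (intro image_subsetI)
    fix x :: "real^'k" assume "x \<in> nonneg_orthant"
    then show "q' x \<in> \<Gamma>"
      using q(1) by (intro Lim_in_closed_set[OF compact_imp_closed[OF allocations_compact] _ F(1) q_lim])
        (auto intro: always_eventually)
  qed
  moreover have "u' 0 = 0"
    using tendsto_unique[OF F(1) u_lim[OF zero_in_nonneg_orthant]] by (simp add: u_def)
  ultimately show ?thesis
    using that[OF F _ alloc_monotonic_tendsto[OF F(1) q(2) q_lim] subgradient_field_tendsto[OF F(1) u u_lim q_lim]]
      u_lim by (simp add: u_def)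
qed

lemma limit_revenue_le_integral_quotient_payment:
  assumes "\<And>n. (q n, s n) \<in> amon_mechanisms \<Gamma> M X" and "(\<lambda>n. revenue M X (s n)) \<longlonglongrightarrow> A"
    and "F \<noteq> bot" "F \<le> sequentially"
    and "B-lipschitz_on nonneg_orthant u" "u 0 = 0"
    and "\<And>x. x \<in> nonneg_orthant \<Longrightarrow> ((\<lambda>n. normalized_utility (q n) (s n) x) \<longlongrightarrow> u x) F"
    and "0 < t"
  shows "A \<le> (\<integral>\<omega>. quotient_payment t u (X \<omega>) \<partial>M)"
proof (rule tendsto_le[OF assms(3)])
  have "B-lipschitz_on nonneg_orthant (normalized_utility (q n) (s n))" for n
    using utility_lipschitz[OF amon_mechanismsD(1,3)[OF assms(1)]] .
  then show "((\<lambda>n. \<integral>\<omega>. quotient_payment t (normalized_utility (q n) (s n)) (X \<omega>) \<partial>M)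
      \<longlongrightarrow> (\<integral>\<omega>. quotient_payment t u (X \<omega>) \<partial>M)) F"
    using assms(5-8) by (intro integral_quotient_payment_tendsto) simp_all
  show "((\<lambda>n. revenue M X (s n)) \<longlongrightarrow> A) F"
    using assms(2,4) by (rule tendsto_mono[rotated])
  show "\<forall>\<^sub>F n in F. revenue M X (s n)
      \<le> (\<integral>\<omega>. quotient_payment t (normalized_utility (q n) (s n)) (X \<omega>) \<partial>M)"
    using revenue_le_integral_quotient_payment[OF assms(1) assms(8)] by simp
qed

context
  fixes q :: "real^'k \<Rightarrow> real^'k"
  assumes q_allocations: "q ` nonneg_orthant \<subseteq> \<Gamma>" and q_monotonic: "alloc_monotonic q"
begin

lemma tendsto_radial_right_limit:
  assumes "x \<in> nonneg_orthant"
  shows "(\<lambda>m. q ((1 + 1 / real (Suc m)) *\<^sub>R x)) \<longlonglongrightarrow> radial_right_limit q x"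
proof -
  define y where "y m = (1 + 1 / real (Suc m)) *\<^sub>R x" for m
  have y_nonneg: "y m \<in> nonneg_orthant" for m
    unfolding y_def using assms by (intro scaleR_in_nonneg_orthant) auto
  have "convergent (\<lambda>m. q (y m) $ i)" for i
  proof -
    have "y (Suc m) $ j \<le> y m $ j" for m j
      using assms by (auto simp: y_def nonneg_orthant_def frac_le intro!: mult_right_mono)
    then have "decseq (\<lambda>m. q (y m) $ i)"
      using q_monotonic y_nonneg by (auto intro!: decseq_SucI simp: alloc_monotonic_def)
    moreover have "\<forall>m. 0 \<le> q (y m) $ i"
      using allocation_nonneg[OF q_allocations y_nonneg] by (simp add: nonneg_orthant_def)
    ultimately show ?thesis
      by (metis decseq_convergent convergentI)
  qed
  then have "(\<lambda>m. q (y m)) \<longlonglongrightarrow> (\<chi> i. lim (\<lambda>m. q (y m) $ i))"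
    by (auto intro!: vec_tendstoI simp: convergent_LIMSEQ_iff)
  then show ?thesis
    unfolding radial_right_limit_def y_def[symmetric] by (metis limI)
qed

lemma radial_right_limit_in_allocations:
  assumes "x \<in> nonneg_orthant"
  shows "radial_right_limit q x \<in> \<Gamma>"
proof (rule Lim_in_closed_set[OF compact_imp_closed[OF allocations_compact] _ _ tendsto_radial_right_limit[OF assms]])
  show "\<forall>\<^sub>F m in sequentially. q ((1 + 1 / real (Suc m)) *\<^sub>R x) \<in> \<Gamma>"
    using q_allocations scaleR_in_nonneg_orthant[OF _ assms]
    by (auto intro!: always_eventually simp: image_subset_iff)
qed simp

lemma alloc_monotonic_radial_right_limit: "alloc_monotonic (radial_right_limit q)"
  unfolding alloc_monotonic_def
proof (intro ballI impI allI)
  fix x y :: "real^'k" and i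
  assume x: "x \<in> nonneg_orthant" and y: "y \<in> nonneg_orthant" and le: "\<forall>i. x $ i \<le> y $ i"
  have "q ((1 + 1 / real (Suc m)) *\<^sub>R x) $ i \<le> q ((1 + 1 / real (Suc m)) *\<^sub>R y) $ i" for m
  proof -
    have "(1 + 1 / real (Suc m)) *\<^sub>R x \<in> nonneg_orthant" "(1 + 1 / real (Suc m)) *\<^sub>R y \<in> nonneg_orthant"
      "\<forall>j. ((1 + 1 / real (Suc m)) *\<^sub>R x) $ j \<le> ((1 + 1 / real (Suc m)) *\<^sub>R y) $ j"
      using x y le by (auto intro!: scaleR_in_nonneg_orthant mult_left_mono)
    then show ?thesis
      using q_monotonic unfolding alloc_monotonic_def by blast
  qed
  then show "radial_right_limit q x $ i \<le> radial_right_limit q y $ i"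
    by (intro LIMSEQ_le[OF tendsto_vec_nth[OF tendsto_radial_right_limit[OF x]]
          tendsto_vec_nth[OF tendsto_radial_right_limit[OF y]]]) auto
qed

context
  fixes u :: "real^'k \<Rightarrow> real"
  assumes u_subgradient: "subgradient_field nonneg_orthant u q"
begin

lemma subgradient_field_radial_right_limit: "subgradient_field nonneg_orthant u (radial_right_limit q)"
  unfolding subgradient_field_def
proof (intro ballI)
  fix x y :: "real^'k" assume x: "x \<in> nonneg_orthant" and y: "y \<in> nonneg_orthant"
  define z where "z m = (1 + 1 / real (Suc m)) *\<^sub>R y" for m
  have z_nonneg: "z m \<in> nonneg_orthant" for m
    unfolding z_def using y by (intro scaleR_in_nonneg_orthant) auto
  have "z \<longlonglongrightarrow> (1 + 0) *\<^sub>R y"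
    unfolding z_def by (intro tendsto_intros LIMSEQ_inverse_real_of_nat[unfolded inverse_eq_divide])
  then have "z \<longlonglongrightarrow> y"
    by simp
  then have "(\<lambda>m. u (z m)) \<longlonglongrightarrow> u y"
    by (rule continuous_on_tendsto_compose[OF lipschitz_on_continuous_on[OF utility_lipschitz[OF q_allocations u_subgradient]] _ y])
      (simp_all add: z_nonneg)
  then have "(\<lambda>m. u (z m) + q (z m) \<bullet> (x - z m)) \<longlonglongrightarrow> u y + radial_right_limit q y \<bullet> (x - y)"
    using tendsto_radial_right_limit[OF y] \<open>z \<longlonglongrightarrow> y\<close> unfolding z_def[symmetric] by (intro tendsto_intros)
  moreover have "u (z m) + q (z m) \<bullet> (x - z m) \<le> u x" for m
    using subgradient_fieldD[OF u_subgradient x z_nonneg] .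
  ultimately show "u y + radial_right_limit q y \<bullet> (x - y) \<le> u x"
    by (intro LIMSEQ_le_const2) auto
qed

lemma tendsto_quotient_payment:
  assumes "x \<in> nonneg_orthant"
  shows "(\<lambda>m. quotient_payment (1 / real (Suc m)) u x) \<longlonglongrightarrow> radial_right_limit q x \<bullet> x - u x"
proof -
  define dq where "dq t = (u ((1 + t) *\<^sub>R x) - u x) / t" for t
  have bounds: "radial_right_limit q x \<bullet> x \<le> dq t \<and> dq t \<le> q ((1 + t) *\<^sub>R x) \<bullet> x" if "0 < t" for t
  proof -
    have "(1 + t) *\<^sub>R x \<in> nonneg_orthant"
      using that assms by (intro scaleR_in_nonneg_orthant) auto
    then show ?thesis
      unfolding dq_def
      using subgradient_field_difference_quotient_bounds[OF subgradient_field_radial_right_limit assms _ that]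
        subgradient_field_difference_quotient_bounds[OF u_subgradient assms _ that] by blast
  qed
  have upper: "(\<lambda>m. q ((1 + 1 / real (Suc m)) *\<^sub>R x) \<bullet> x) \<longlonglongrightarrow> radial_right_limit q x \<bullet> x"
    using tendsto_inner[OF tendsto_radial_right_limit[OF assms] tendsto_const] .
  have lower: "\<forall>m. radial_right_limit q x \<bullet> x \<le> dq (1 / real (Suc m))"
    and between: "\<forall>m. dq (1 / real (Suc m)) \<le> q ((1 + 1 / real (Suc m)) *\<^sub>R x) \<bullet> x"
    using bounds by simp_all
  have "(\<lambda>m. dq (1 / real (Suc m))) \<longlonglongrightarrow> radial_right_limit q x \<bullet> x"
    using tendsto_sandwich[OF always_eventually[OF lower] always_eventually[OF between] tendsto_const upper] .
  then show ?thesis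
    unfolding quotient_payment_def dq_def[symmetric] by (intro tendsto_diff tendsto_const)
qed

context
  assumes u_zero: "u 0 = 0"
begin

lemma integrable_radial_quotient_payment:
  "integrable M (\<lambda>\<omega>. quotient_payment (1 / real (Suc m)) u (X \<omega>))"
  using utility_lipschitz[OF q_allocations u_subgradient] u_zero by (rule integrable_quotient_payment) simp

lemma radial_payment_measurable:
  "(\<lambda>\<omega>. radial_right_limit q (X \<omega>) \<bullet> X \<omega> - u (X \<omega>)) \<in> borel_measurable M"
  by (rule borel_measurable_LIMSEQ_real[OF tendsto_quotient_payment[OF valuation_nonneg]
        borel_measurable_integrable[OF integrable_radial_quotient_payment]])

lemma integral_quotient_payment_tendsto_revenue:
  "(\<lambda>m. \<integral>\<omega>. quotient_payment (1 / real (Suc m)) u (X \<omega>) \<partial>M)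
    \<longlonglongrightarrow> revenue M X (\<lambda>x. radial_right_limit q x \<bullet> x - u x)"
  unfolding revenue_def
proof (rule integral_dominated_convergence[where w="\<lambda>\<omega>. 2 * B * norm (X \<omega>)"])
  show "AE \<omega> in M. norm (quotient_payment (1 / real (Suc m)) u (X \<omega>)) \<le> 2 * B * norm (X \<omega>)" for m
    using quotient_payment_bounds(2)[OF utility_lipschitz[OF q_allocations u_subgradient] u_zero]
      valuation_nonneg by (intro AE_I2) simp
qed (use tendsto_quotient_payment[OF valuation_nonneg] integrable_radial_quotient_payment
      radial_payment_measurable valuation_integrable in auto)

lemma radial_mechanism_admissible:
  "(radial_right_limit q, \<lambda>x. radial_right_limit q x \<bullet> x - u x) \<in> amon_mechanisms \<Gamma> M X"
  unfolding amon_mechanisms_def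
proof (intro CollectI case_prodI conjI)
  show "is_mechanism \<Gamma> (radial_right_limit q) (\<lambda>x. radial_right_limit q x \<bullet> x - u x)"
    unfolding is_mechanism_def
    using radial_right_limit_in_allocations by blast
  show "mech_IC (radial_right_limit q) (\<lambda>x. radial_right_limit q x \<bullet> x - u x)"
    using subgradient_field_radial_right_limit
    by (rule subgradient_field_imp_mech_IC)
  have "radial_right_limit q ` nonneg_orthant \<subseteq> \<Gamma>"
    using radial_right_limit_in_allocations by blast
  note Q_nonneg = allocation_nonneg[OF this zero_in_nonneg_orthant]
  show "mech_IR (radial_right_limit q) (\<lambda>x. radial_right_limit q x \<bullet> x - u x)"
    using subgradient_field_nonneg[OF subgradient_field_radial_right_limit
        Q_nonneg u_zero] by (simp add: mech_IR_def)
  show "alloc_monotonic (radial_right_limit q)"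
    using alloc_monotonic_radial_right_limit .
  show "(\<lambda>\<omega>. radial_right_limit q (X \<omega>) \<bullet> X \<omega> - u (X \<omega>)) \<in> borel_measurable M"
    by (rule radial_payment_measurable)
qed

end

end

end

end

theorem theorem3:
  fixes \<Gamma> :: "(real^'k) set"
    and M :: "'a measure"
    and X :: "'a \<Rightarrow> real^'k"
  assumes "\<Gamma> \<noteq> {}" and "compact \<Gamma>" and "\<Gamma> \<subseteq> nonneg_orthant"
    and "prob_space M"
    and "X \<in> borel_measurable M"
    and "\<forall>\<omega>\<in>space M. X \<omega> \<in> nonneg_orthant"
    and "integrable M (\<lambda>\<omega>. norm (X \<omega>))"
  shows "\<exists>q s. (q, s) \<in> amon_mechanisms \<Gamma> M X
           \<and> ereal (revenue M X s) = AMonRev \<Gamma> M X"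
proof -
  obtain B where "\<forall>\<gamma>\<in>\<Gamma>. norm \<gamma> \<le> B"
    using compact_imp_bounded[OF assms(2)] by (auto simp: bounded_iff)
  then interpret auction M \<Gamma> B X
    using assms by (intro auction.intro auction_axioms.intro) auto
  obtain A q s where A: "AMonRev \<Gamma> M X = ereal A" and adm: "\<And>n. (q n, s n) \<in> amon_mechanisms \<Gamma> M X"
    and revenue: "(\<lambda>n. revenue M X (s n)) \<longlonglongrightarrow> A"
    by (rule approximating_mechanisms) (rule that)
  obtain F q' u where F: "F \<noteq> bot" "F \<le> sequentially" and q': "q' ` nonneg_orthant \<subseteq> \<Gamma>" "alloc_monotonic q'"
    and u: "subgradient_field nonneg_orthant u q'" "u 0 = 0"
    and lim: "\<And>x. x \<in> nonneg_orthant \<Longrightarrow> ((\<lambda>n. normalized_utility (q n) (s n) x) \<longlongrightarrow> u x) F"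
    by (rule cluster_limit_of_mechanisms[OF adm]) (rule that)
  define S where "S x = radial_right_limit q' x \<bullet> x - u x" for x
  have "A \<le> (\<integral>\<omega>. quotient_payment (1 / real (Suc m)) u (X \<omega>) \<partial>M)" for m
    by (rule limit_revenue_le_integral_quotient_payment[OF adm revenue F
          utility_lipschitz[OF q'(1) u(1)] u(2) lim]) (auto simp: zero_less_divide_1_iff)
  then have "A \<le> revenue M X S"
    unfolding S_def by (intro LIMSEQ_le_const[OF integral_quotient_payment_tendsto_revenue[OF q' u]]) simp
  moreover have admissible: "(radial_right_limit q', S) \<in> amon_mechanisms \<Gamma> M X"
    unfolding S_def using q' u by (rule radial_mechanism_admissible)
  ultimately have "ereal (revenue M X S) = AMonRev \<Gamma> M X"
    using revenue_le_AMonRev[OF admissible] A by simp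
  with admissible show ?thesis
    by blast
qed

end
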